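(* In the setting described in the context, let \texttt{Orienteering} be a routine with constant-factor guarantee $1/\lambda$ ($\lambda\ge1$): for any node weights $\nu(j)\ge0$ it returns a path $\hat\rho\in\mathcal{X}(p_s,\omega)$ with $\sum_{j}\mathbb{I}_j(\hat\rho)\nu(j)\ge\frac1\lambda\sum_j\mathbb{I}_j(\rho)\nu(j)$ for all $\rho\in\mathcal{X}(p_s,\omega)$. For $\ell=1,2,\dots$, let $\hat\rho_\ell$ be the path returned by \texttt{Orienteering} with node weights $$\nu_\ell(j) = \zeta_j d_j\prod_{\iota=1}^{\ell-1}\left(1-\mathbb{E}\left[z_j(\hat{\rho}_{\iota})\right]\right).$$ Let $X^*_K=\{\rho_k^*\}_{k=1}^K$ be an optimal solution to the Team Surviving Orienteers problem with $K$ robots. Then for every $L\ge K$, with $\hat{X}_L = \{\hat{\rho}_{\ell}\}_{\ell=1}^L$, $$J(\hat{X}_L) \ge \left(1-e^{-\frac{p_sL}{\lambda K}}\right)J(X^*_K),$$ where $J(\{\rho_k\}_{k=1}^m)=\sum_{j=1}^V d_j\,\mathbb{E}\big[1-\prod_{k=1}^m(1-z_j(\rho_k))\big]$ is the weighted expected number of nodes visited by at least one robot.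
   Context: Let $\mathcal{G}=(\mathcal{V},\mathcal{E})$ be a finite simple graph with node set $\mathcal{V}=\{1,\dots,V\}$ and edge weights $\omega:\mathcal{E}\to(0,1]$ (survival probabilities). A path $\rho$ is a sequence of nodes $\rho(0),\dots,\rho(\lvert\rho\rvert)$ with $(\rho(n-1),\rho(n))\in\mathcal{E}$ for each $n$. For a path $\rho$, let $s_n(\rho)$, $n=1,\dots,\lvert\rho\rvert$, be independent Bernoulli variables with $\mathbb{P}\{s_n(\rho)=1\}=\omega((\rho(n-1),\rho(n)))$, $a_n(\rho)=\prod_{i=1}^n s_i(\rho)$, and $z_j(\rho)=\max_{n=1,\dots,\lvert\rho\rvert} a_n(\rho)\,\mathbb{I}\{\rho(n)=j\}$; random variables for distinct paths are independent. Let $\mathbb{I}_j(\rho)=1$ if $\rho(n)=j$ for some $n\in\{1,\dots,\lvert\rho\rvert\}$, else $0$. Given start node $v_s$, terminal node $v_t$ and $p_s\in(0,1]$, $\mathcal{X}(p_s,\omega)$ is the (assumed nonempty) set of paths $\rho$ with $\rho(0)=v_s$, $\rho(\lvert\rho\rvert)=v_t$ and $\mathbb{P}\{a_{\lvert\rho\rvert}(\rho)=1\}\ge p_s$ (equivalently, an orienteering feasibility constraint on the graph with edge weights $-\log\omega(e)$ and budget $-\log p_s$). Node priorities $d_j>0$ are given. The Team Surviving Orienteers problem with $K$ robots is to choose $\rho_1,\dots,\rho_K\in\mathcal{X}(p_s,\omega)$ maximizing $J(\{\rho_k\}_{k=1}^K)$. Define $\zeta_j=\max_{\rho\in\mathcal{X}(p_s,\omega)}\mathbb{E}[z_j(\rho)]$.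 *)

theory Defs
  imports "HOL-Probability.Probability"
begin

(* Graph: nodes {1..V}, edge set E of ordered pairs (symmetric, irreflexive),
   edge survival probabilities w (a,b). A path is a node list rho of length |rho|+1. *)

definition simple_graph :: "nat \<Rightarrow> (nat \<times> nat) set \<Rightarrow> bool" where
  "simple_graph V E \<longleftrightarrow> E \<subseteq> {1..V} \<times> {1..V} \<and> (\<forall>a b. (a,b) \<in> E \<longrightarrow> (b,a) \<in> E) \<and> (\<forall>a. (a,a) \<notin> E)"

definition plen :: "nat list \<Rightarrow> nat" where
  "plen rho = length rho - 1"

definition is_path :: "(nat \<times> nat) set \<Rightarrow> nat list \<Rightarrow> bool" where
  "is_path E rho \<longleftrightarrow> rho \<noteq> [] \<and> (\<forall>n\<in>{1..plen rho}. (rho ! (n-1), rho ! n) \<in> E)"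

definition path_edges :: "nat list \<Rightarrow> (nat \<times> nat) list" where
  "path_edges rho = zip rho (tl rho)"

fun bern_seq :: "real list \<Rightarrow> bool list pmf" where
  "bern_seq [] = return_pmf []"
| "bern_seq (p # ps) = bernoulli_pmf p \<bind> (\<lambda>b. bern_seq ps \<bind> (\<lambda>bs. return_pmf (b # bs)))"

definition surv_pmf :: "(nat \<times> nat \<Rightarrow> real) \<Rightarrow> nat list \<Rightarrow> bool list pmf" where
  "surv_pmf w rho = bern_seq (map w (path_edges rho))"

(* a_n = prod_{i=1}^n s_i ; s is the outcome list, s ! (i-1) = s_i *)
definition alive :: "bool list \<Rightarrow> nat \<Rightarrow> real" where
  "alive s n = (\<Prod>i\<in>{1..n}. if s ! (i-1) then 1 else 0)"

(* z_j(rho) = max_{n=1..|rho|} a_n * I{rho(n)=j}; value 0 if |rho| = 0 *)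
definition zvar :: "nat list \<Rightarrow> nat \<Rightarrow> bool list \<Rightarrow> real" where
  "zvar rho j s = Max (insert 0 ((\<lambda>n. alive s n * (if rho ! n = j then 1 else 0)) ` {1..plen rho}))"

definition Ez :: "(nat \<times> nat \<Rightarrow> real) \<Rightarrow> nat list \<Rightarrow> nat \<Rightarrow> real" where
  "Ez w rho j = measure_pmf.expectation (surv_pmf w rho) (zvar rho j)"

definition visits :: "nat list \<Rightarrow> nat \<Rightarrow> bool" where
  "visits rho j \<longleftrightarrow> (\<exists>n\<in>{1..plen rho}. rho ! n = j)"

definition indic :: "nat list \<Rightarrow> nat \<Rightarrow> real" where
  "indic rho j = (if visits rho j then 1 else 0)"

definition feasible :: "(nat \<times> nat) set \<Rightarrow> (nat \<times> nat \<Rightarrow> real) \<Rightarrow> nat \<Rightarrow> nat \<Rightarrow> real \<Rightarrow> nat list set" where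
  "feasible E w vs vt ps = {rho. is_path E rho \<and> hd rho = vs \<and> last rho = vt \<and>
      measure_pmf.prob (surv_pmf w rho) {s. alive s (plen rho) = 1} \<ge> ps}"

definition zeta :: "(nat \<times> nat) set \<Rightarrow> (nat \<times> nat \<Rightarrow> real) \<Rightarrow> nat \<Rightarrow> nat \<Rightarrow> real \<Rightarrow> nat \<Rightarrow> real" where
  "zeta E w vs vt ps j = (SUP rho \<in> feasible E w vs vt ps. Ez w rho j)"

fun team_pmf :: "(nat \<times> nat \<Rightarrow> real) \<Rightarrow> nat list list \<Rightarrow> bool list list pmf" where
  "team_pmf w [] = return_pmf []"
| "team_pmf w (rho # rhos) = surv_pmf w rho \<bind> (\<lambda>s. team_pmf w rhos \<bind> (\<lambda>ss. return_pmf (s # ss)))"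

definition Jteam :: "nat \<Rightarrow> (nat \<Rightarrow> real) \<Rightarrow> (nat \<times> nat \<Rightarrow> real) \<Rightarrow> nat list list \<Rightarrow> real" where
  "Jteam V d w X = (\<Sum>j=1..V. d j * measure_pmf.expectation (team_pmf w X)
      (\<lambda>ss. 1 - (\<Prod>k<length X. 1 - zvar (X ! k) j (ss ! k))))"

end

theory Submission imports Defs begin

text \<open>
  Write \<open>F m\<close> for the value of the first \<open>m\<close> greedy paths and \<open>OPT\<close> for the value of the
  team \<open>X\<^sup>*\<^sub>K\<close>.  Survival of a path implies that every node it visits is reached, so
  \<open>p\<^sub>s \<bbbI>\<^sub>j(\<rho>) \<le> E[z\<^sub>j(\<rho>)] \<le> \<zeta>\<^sub>j \<bbbI>\<^sub>j(\<rho>)\<close> for feasible \<open>\<rho>\<close>.  Hence the oracle, run with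
  the residual weights \<open>\<nu>\<^sub>\<ell>\<close>, gains at least \<open>p\<^sub>s/\<lambda>\<close> times the residual value of each single
  path of \<open>X\<^sup>*\<^sub>K\<close>, and by the union bound at least \<open>c (OPT - F m)\<close> with \<open>c = p\<^sub>s/(\<lambda>K)\<close>.
  This recurrence gives \<open>F L \<ge> (1 - (1 - c)\<^sup>L) OPT \<ge> (1 - e\<^sup>-\<^sup>c\<^sup>L) OPT\<close>.
\<close>

lemma expectation_bind_pmf_bounded:
  fixes f :: "'b \<Rightarrow> real"
  assumes "\<And>x. \<bar>f x\<bar> \<le> B"
  shows "measure_pmf.expectation (M \<bind> N) f
       = measure_pmf.expectation M (\<lambda>x. measure_pmf.expectation (N x) f)"
  unfolding measure_pmf_bind
  by (rule integral_bind[where K="count_space UNIV" and B=B and B'=1])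
     (use assms measurable_measure_pmf[of N] in
       \<open>auto simp: measure_pmf.emeasure_space_1 intro: measure_pmf.finite_measure\<close>)

lemma integrable_measure_pmf_bounded:
  fixes f :: "'b \<Rightarrow> real"
  assumes "\<And>x. \<bar>f x\<bar> \<le> B"
  shows "integrable (measure_pmf M) f"
  by (rule measure_pmf.integrable_const_bound[where B=B]) (use assms in auto)

lemma alive_01: "alive s n = 0 \<or> alive s n = 1"
  unfolding alive_def by (induction n) auto

lemma alive_bounds: "0 \<le> alive s n" "alive s n \<le> 1"
  using alive_01[of s n] by auto

lemma alive_Suc: "alive s (Suc n) = alive s n * (if s ! n then 1 else 0)"
  unfolding alive_def by (simp add: prod.nat_ivl_Suc')

lemma alive_antimono:
  assumes "n \<le> m"
  shows "alive s m \<le> alive s n"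
  using assms
proof (induction m rule: dec_induct)
  case (step m)
  then show ?case using alive_01[of s m] by (auto simp: alive_Suc)
qed simp

lemma zvar_bounds: "0 \<le> zvar rho j s" "zvar rho j s \<le> 1"
proof -
  have "\<forall>x \<in> (\<lambda>n. alive s n * (if rho ! n = j then 1 else 0)) ` {1..plen rho}. x \<le> 1"
    by (auto simp: alive_bounds)
  then show "zvar rho j s \<le> 1" "0 \<le> zvar rho j s"
    unfolding zvar_def by (simp_all add: Max_ge_iff)
qed

lemma zvar_not_visits: "\<not> visits rho j \<Longrightarrow> zvar rho j s = 0"
  unfolding zvar_def visits_def by (cases "{Suc 0..plen rho} = {}") auto

lemma zvar_ge_alive:
  assumes "n \<in> {1..plen rho}" "rho ! n = j"
  shows "alive s (plen rho) \<le> zvar rho j s"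
proof -
  have "alive s n \<le> zvar rho j s"
    unfolding zvar_def using assms by (intro Max_ge) force+
  then show ?thesis using assms alive_antimono[of n "plen rho" s] by simp
qed

lemma Ez_bounds: "0 \<le> Ez w rho j" "Ez w rho j \<le> 1"
proof -
  have "measure_pmf.expectation (surv_pmf w rho) (zvar rho j)
     \<le> measure_pmf.expectation (surv_pmf w rho) (\<lambda>_. 1)"
    by (intro integral_mono integrable_measure_pmf_bounded[where B=1])
       (auto simp: zvar_bounds abs_le_iff intro: order_trans[OF _ zvar_bounds(2)])
  then show "Ez w rho j \<le> 1" "0 \<le> Ez w rho j"
    unfolding Ez_def by (auto simp: zvar_bounds)
qed

definition miss_prob :: "(nat \<times> nat \<Rightarrow> real) \<Rightarrow> nat list list \<Rightarrow> nat \<Rightarrow> real" where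
  "miss_prob w X j = (\<Prod>rho\<leftarrow>X. 1 - Ez w rho j)"

lemma miss_prob_bounds: "0 \<le> miss_prob w X j" "miss_prob w X j \<le> 1"
  unfolding miss_prob_def
  by (induction X) (auto simp: Ez_bounds mult_le_one)

lemma miss_prob_append: "miss_prob w (X @ Y) j = miss_prob w X j * miss_prob w Y j"
  by (simp add: miss_prob_def)

lemma expectation_team_pmf_prod:
  "measure_pmf.expectation (team_pmf w X) (\<lambda>ss. \<Prod>k<length X. 1 - zvar (X ! k) j (ss ! k))
   = miss_prob w X j"
proof (induction X)
  case Nil
  then show ?case by (simp add: miss_prob_def)
next
  case (Cons rho X)
  let ?g = "\<lambda>ss. \<Prod>k<length X. 1 - zvar (X ! k) j (ss ! k)"
  have bounded: "\<bar>\<Prod>k<n. 1 - zvar (Y ! k) j (ss ! k)\<bar> \<le> 1" for n Y ss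
    by (simp add: prod_le_1 prod_nonneg zvar_bounds)
  have "measure_pmf.expectation (team_pmf w (rho # X))
          (\<lambda>ss. \<Prod>k<length (rho # X). 1 - zvar ((rho # X) ! k) j (ss ! k))
      = measure_pmf.expectation (surv_pmf w rho)
          (\<lambda>s. (1 - zvar rho j s) * measure_pmf.expectation (team_pmf w X) ?g)"
    unfolding team_pmf.simps expectation_bind_pmf_bounded[OF bounded] expectation_return_pmf
    by (simp add: prod.lessThan_Suc_shift del: prod.lessThan_Suc)
  also have "\<dots> = (1 - Ez w rho j) * miss_prob w X j"
    using integrable_measure_pmf_bounded[of "zvar rho j" 1 "surv_pmf w rho"]
    by (simp add: Cons.IH Ez_def zvar_bounds abs_le_iff)
  finally show ?case by (simp add: miss_prob_def)
qed

lemma Jteam_eq: "Jteam V d w X = (\<Sum>j=1..V. d j * (1 - miss_prob w X j))"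
proof -
  have "integrable (measure_pmf (team_pmf w X)) (\<lambda>ss. \<Prod>k<length X. 1 - zvar (X ! k) j (ss ! k))"
    for j by (rule integrable_measure_pmf_bounded[where B=1])
             (simp add: prod_le_1 prod_nonneg zvar_bounds)
  then show ?thesis
    unfolding Jteam_def by (simp add: expectation_team_pmf_prod)
qed

lemma Jteam_nonneg:
  assumes "\<forall>j\<in>{1..V}. 0 \<le> d j"
  shows "0 \<le> Jteam V d w X"
  unfolding Jteam_eq using assms miss_prob_bounds by (intro sum_nonneg) simp

lemma Jteam_snoc_gain:
  "Jteam V d w (X @ [rho]) - Jteam V d w X = (\<Sum>j=1..V. d j * miss_prob w X j * Ez w rho j)"
  unfolding Jteam_eq miss_prob_append
  by (simp add: sum_subtractf[symmetric] miss_prob_def algebra_simps)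

lemma Jteam_diff_le:
  assumes "\<forall>j\<in>{1..V}. 0 \<le> d j"
  shows "Jteam V d w Y - Jteam V d w X
         \<le> (\<Sum>j=1..V. d j * miss_prob w X j * (1 - miss_prob w Y j))"
  unfolding Jteam_eq sum_subtractf[symmetric]
proof (rule sum_mono)
  fix j assume "j \<in> {1..V}"
  then have "d j * (miss_prob w Y j * miss_prob w X j) \<le> d j * miss_prob w Y j"
    using assms miss_prob_bounds by (simp add: mult_left_mono mult_left_le)
  then show "d j * (1 - miss_prob w Y j) - d j * (1 - miss_prob w X j)
             \<le> d j * miss_prob w X j * (1 - miss_prob w Y j)"
    by (simp add: algebra_simps)
qed

lemma one_minus_prod_list_le_sum_list:
  fixes p :: "'a \<Rightarrow> real"
  assumes "\<forall>x\<in>set xs. 0 \<le> p x \<and> p x \<le> 1"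
  shows "1 - (\<Prod>x\<leftarrow>xs. 1 - p x) \<le> (\<Sum>x\<leftarrow>xs. p x)"
  using assms
proof (induction xs)
  case (Cons x xs)
  have "0 \<le> (\<Prod>x\<leftarrow>xs. 1 - p x)" "(\<Prod>x\<leftarrow>xs. 1 - p x) \<le> 1"
    using Cons.prems by (induction xs) (auto simp: mult_le_one)
  then have "p x * (\<Prod>x\<leftarrow>xs. 1 - p x) \<le> p x"
    using Cons.prems by (simp add: mult_left_le)
  then show ?case using Cons by (simp add: algebra_simps)
qed simp

lemma ps_indic_le_Ez:
  assumes "rho \<in> feasible E w vs vt ps"
  shows "ps * indic rho j \<le> Ez w rho j"
proof (cases "visits rho j")
  case True
  then obtain n where n: "n \<in> {1..plen rho}" "rho ! n = j" unfolding visits_def by blast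
  let ?survive = "{s. alive s (plen rho) = 1}"
  have "indicator ?survive s \<le> zvar rho j s" for s
    using zvar_ge_alive[OF n, of s] zvar_bounds[of rho j s] by (auto simp: indicator_def)
  then have "measure_pmf.expectation (surv_pmf w rho) (indicator ?survive) \<le> Ez w rho j"
    unfolding Ez_def
    by (intro integral_mono integrable_measure_pmf_bounded[where B=1])
       (auto simp: indicator_def abs_le_iff zvar_bounds)
  then show ?thesis using assms True by (simp add: feasible_def indic_def)
qed (simp add: indic_def Ez_bounds)

lemma Ez_le_zeta:
  assumes "rho \<in> feasible E w vs vt ps"
  shows "Ez w rho j \<le> zeta E w vs vt ps j"
proof -
  have "bdd_above ((\<lambda>rho. Ez w rho j) ` feasible E w vs vt ps)"
    using Ez_bounds by (auto intro!: bdd_aboveI[where M=1])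
  then show ?thesis unfolding zeta_def using assms by (rule cSUP_upper[rotated])
qed

lemma Ez_le_zeta_indic:
  assumes "rho \<in> feasible E w vs vt ps"
  shows "Ez w rho j \<le> zeta E w vs vt ps j * indic rho j"
proof (cases "visits rho j")
  case False
  then have "zvar rho j = (\<lambda>_. 0)" by (auto simp: zvar_not_visits)
  then show ?thesis using False by (simp add: Ez_def indic_def)
qed (simp add: Ez_le_zeta[OF assms] indic_def)

lemma zeta_bounds:
  assumes "feasible E w vs vt ps \<noteq> {}"
  shows "0 \<le> zeta E w vs vt ps j" "zeta E w vs vt ps j \<le> 1"
proof -
  obtain rho where "rho \<in> feasible E w vs vt ps" using assms by blast
  then show "0 \<le> zeta E w vs vt ps j"
    using Ez_le_zeta Ez_bounds(1) order_trans by blast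
  show "zeta E w vs vt ps j \<le> 1"
    unfolding zeta_def using assms Ez_bounds by (simp add: cSUP_least)
qed

lemma oracle_path_gain:
  fixes r :: "nat \<Rightarrow> real"
  assumes nonempty: "feasible E w vs vt ps \<noteq> {}" and ps: "0 < ps" and lam: "0 < lam"
    and r: "\<forall>j\<in>{1..V}. 0 \<le> r j"
    and oracle_feasible: "rho_new \<in> feasible E w vs vt ps"
    and oracle_approx: "\<forall>rho\<in>feasible E w vs vt ps.
        (\<Sum>j=1..V. indic rho_new j * (zeta E w vs vt ps j * r j))
          \<ge> (1/lam) * (\<Sum>j=1..V. indic rho j * (zeta E w vs vt ps j * r j))"
    and rho: "rho \<in> feasible E w vs vt ps"
  shows "(\<Sum>j=1..V. r j * Ez w rho j) \<le> lam / ps * (\<Sum>j=1..V. r j * Ez w rho_new j)"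
proof -
  let ?Z = "zeta E w vs vt ps"
  have "(\<Sum>j=1..V. r j * Ez w rho j) \<le> (\<Sum>j=1..V. indic rho j * (?Z j * r j))"
    using r Ez_le_zeta_indic[OF rho] by (intro sum_mono) (simp add: mult_left_mono algebra_simps)
  also have "\<dots> \<le> lam * (\<Sum>j=1..V. indic rho_new j * (?Z j * r j))"
    using oracle_approx rho lam by (simp add: field_simps)
  also have "\<dots> \<le> lam * (\<Sum>j=1..V. r j * indic rho_new j)"
    using r lam zeta_bounds[OF nonempty]
    by (intro mult_left_mono sum_mono) (auto simp: indic_def mult_left_le_one_le)
  also have "\<dots> = lam / ps * (\<Sum>j=1..V. r j * (ps * indic rho_new j))"
    using ps by (simp add: sum_distrib_left mult_ac)
  also have "\<dots> \<le> lam / ps * (\<Sum>j=1..V. r j * Ez w rho_new j)"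
    using r ps lam ps_indic_le_Ez[OF oracle_feasible]
    by (intro mult_left_mono sum_mono) auto
  finally show ?thesis .
qed

lemma oracle_team_gain:
  fixes r :: "nat \<Rightarrow> real"
  assumes nonempty: "feasible E w vs vt ps \<noteq> {}" and ps: "0 < ps" and lam: "0 < lam"
    and r: "\<forall>j\<in>{1..V}. 0 \<le> r j"
    and oracle_feasible: "rho_new \<in> feasible E w vs vt ps"
    and oracle_approx: "\<forall>rho\<in>feasible E w vs vt ps.
        (\<Sum>j=1..V. indic rho_new j * (zeta E w vs vt ps j * r j))
          \<ge> (1/lam) * (\<Sum>j=1..V. indic rho j * (zeta E w vs vt ps j * r j))"
    and X: "set X \<subseteq> feasible E w vs vt ps"
  shows "(\<Sum>j=1..V. r j * (1 - miss_prob w X j))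
         \<le> real (length X) * lam / ps * (\<Sum>j=1..V. r j * Ez w rho_new j)"
proof -
  have "(\<Sum>j=1..V. r j * (1 - miss_prob w X j)) \<le> (\<Sum>j=1..V. r j * (\<Sum>rho\<leftarrow>X. Ez w rho j))"
    unfolding miss_prob_def using r
    by (intro sum_mono mult_left_mono one_minus_prod_list_le_sum_list) (auto simp: Ez_bounds)
  also have "\<dots> = (\<Sum>rho\<leftarrow>X. \<Sum>j=1..V. r j * Ez w rho j)"
    by (induction X) (simp_all add: sum.distrib distrib_left)
  also have "\<dots> \<le> (\<Sum>rho\<leftarrow>X. lam / ps * (\<Sum>j=1..V. r j * Ez w rho_new j))"
    using X by (intro sum_list_mono oracle_path_gain[OF nonempty ps lam r oracle_feasible oracle_approx])
       auto
  finally show ?thesis by (simp add: sum_list_triv)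
qed

lemma greedy_round_gain:
  assumes nonempty: "feasible E w vs vt ps \<noteq> {}" and ps: "0 < ps" and lam: "0 < lam"
    and d: "\<forall>j\<in>{1..V}. 0 \<le> d j"
    and oracle_feasible: "rho_new \<in> feasible E w vs vt ps"
    and oracle_approx: "\<forall>rho\<in>feasible E w vs vt ps.
        (\<Sum>j=1..V. indic rho_new j * (zeta E w vs vt ps j * (d j * miss_prob w G j)))
          \<ge> (1/lam) * (\<Sum>j=1..V. indic rho j * (zeta E w vs vt ps j * (d j * miss_prob w G j)))"
    and X: "set X \<subseteq> feasible E w vs vt ps" "X \<noteq> []"
  shows "ps / (lam * real (length X)) * (Jteam V d w X - Jteam V d w G)
         \<le> Jteam V d w (G @ [rho_new]) - Jteam V d w G"
proof -
  have r: "\<forall>j\<in>{1..V}. 0 \<le> d j * miss_prob w G j" using d miss_prob_bounds by simp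
  have "Jteam V d w X - Jteam V d w G \<le> (\<Sum>j=1..V. d j * miss_prob w G j * (1 - miss_prob w X j))"
    by (rule Jteam_diff_le[OF d])
  also have "\<dots> \<le> real (length X) * lam / ps * (\<Sum>j=1..V. d j * miss_prob w G j * Ez w rho_new j)"
    by (rule oracle_team_gain[OF nonempty ps lam r oracle_feasible oracle_approx X(1)])
  also have "\<dots> = real (length X) * lam / ps * (Jteam V d w (G @ [rho_new]) - Jteam V d w G)"
    by (simp add: Jteam_snoc_gain)
  finally show ?thesis using ps lam X(2) by (simp add: field_simps)
qed

lemma greedy_recurrence_bound:
  fixes F :: "nat \<Rightarrow> real"
  assumes "F 0 = 0" "0 \<le> c" "c \<le> 1" "0 \<le> OPT"
    and step: "\<And>m. c * (OPT - F m) \<le> F (Suc m) - F m"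
  shows "(1 - exp (- c * real n)) * OPT \<le> F n"
proof -
  have gap: "OPT - F m \<le> (1 - c) ^ m * OPT" for m
  proof (induction m)
    case (Suc m)
    have "OPT - F (Suc m) \<le> (1 - c) * (OPT - F m)"
      using step[of m] by (simp add: algebra_simps)
    also have "\<dots> \<le> (1 - c) * ((1 - c) ^ m * OPT)"
      using Suc assms by (intro mult_left_mono) auto
    finally show ?case by simp
  qed (simp add: assms)
  have "(1 - c) ^ n \<le> exp (- c) ^ n"
    using assms by (intro power_mono) (auto simp: exp_ge_add_one_self[of "-c", simplified])
  then have "(1 - exp (- c * real n)) * OPT \<le> (1 - (1 - c) ^ n) * OPT"
    using assms by (intro mult_right_mono) (auto simp: exp_of_nat_mult[symmetric] mult.commute)
  then show ?thesis using gap[of n] by (simp add: algebra_simps)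
qed

theorem theorem2:
  fixes V K L :: nat and E :: "(nat \<times> nat) set" and w :: "nat \<times> nat \<Rightarrow> real"
    and vs vt :: nat and ps lam :: real and d :: "nat \<Rightarrow> real"
    and orient :: "(nat \<Rightarrow> real) \<Rightarrow> nat list"
    and rhat :: "nat \<Rightarrow> nat list" and Xopt :: "nat list list"
  assumes graph: "simple_graph V E"
    and w_sym: "\<forall>a b. (a,b) \<in> E \<longrightarrow> w (a,b) = w (b,a)"
    and w_range: "\<forall>e\<in>E. 0 < w e \<and> w e \<le> 1"
    and vs: "vs \<in> {1..V}" and vt: "vt \<in> {1..V}"
    and ps: "0 < ps" "ps \<le> 1"
    and nonempty: "feasible E w vs vt ps \<noteq> {}"
    and d_pos: "\<forall>j\<in>{1..V}. d j > 0"
    and lam: "lam \<ge> 1"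
    and orient: "\<forall>\<nu>. (\<forall>j\<in>{1..V}. \<nu> j \<ge> 0) \<longrightarrow>
        orient \<nu> \<in> feasible E w vs vt ps \<and>
        (\<forall>rho\<in>feasible E w vs vt ps.
           (\<Sum>j=1..V. indic (orient \<nu>) j * \<nu> j) \<ge> (1/lam) * (\<Sum>j=1..V. indic rho j * \<nu> j))"
    and greedy: "\<forall>l\<ge>1. rhat l = orient (\<lambda>j. zeta E w vs vt ps j * d j *
        (\<Prod>i\<in>{1..l-1}. 1 - Ez w (rhat i) j))"
    and K: "K \<ge> 1"
    and opt_len: "length Xopt = K"
    and opt_feas: "set Xopt \<subseteq> feasible E w vs vt ps"
    and opt: "\<forall>Y. length Y = K \<and> set Y \<subseteq> feasible E w vs vt ps \<longrightarrow> Jteam V d w Y \<le> Jteam V d w Xopt"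
    and L: "L \<ge> K"
  shows "Jteam V d w (map rhat [1..<L+1]) \<ge> (1 - exp (- (ps * real L) / (lam * real K))) * Jteam V d w Xopt"
proof -
  define F where "F m = Jteam V d w (map rhat [1..<m+1])" for m
  define c where "c = ps / (lam * real K)"
  have d_nonneg: "\<forall>j\<in>{1..V}. 0 \<le> d j" using d_pos by auto
  have "1 \<le> lam * real K"
    using mult_mono[of 1 lam 1 "real K"] lam K by simp
  then have c: "0 \<le> c" "c \<le> 1"
    using ps unfolding c_def by auto
  have greedy_step: "c * (Jteam V d w Xopt - F m) \<le> F (Suc m) - F m" for m
  proof -
    let ?G = "map rhat [1..<m+1]"
    let ?\<nu> = "\<lambda>j. zeta E w vs vt ps j * (d j * miss_prob w ?G j)"
    have "(\<Prod>i\<in>{1..m}. 1 - Ez w (rhat i) j) = miss_prob w ?G j" for j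
      by (simp add: miss_prob_def prod.distinct_set_conv_list[symmetric]
                    atLeastLessThanSuc_atLeastAtMost del: upt_Suc)
    then have "rhat (Suc m) = orient ?\<nu>"
      using greedy[rule_format, of "Suc m"] by (simp add: mult.assoc)
    moreover have "\<forall>j\<in>{1..V}. 0 \<le> ?\<nu> j"
      using d_nonneg zeta_bounds[OF nonempty] miss_prob_bounds by simp
    ultimately have "c * (Jteam V d w Xopt - F m) \<le> Jteam V d w (?G @ [rhat (Suc m)]) - F m"
      using orient opt_feas opt_len K lam ps d_nonneg unfolding c_def F_def opt_len[symmetric]
      by (intro greedy_round_gain[OF nonempty]) auto
    then show ?thesis by (simp add: F_def)
  qed
  have "F 0 = 0" by (simp add: F_def Jteam_eq miss_prob_def)
  then have "(1 - exp (- c * real L)) * Jteam V d w Xopt \<le> F L"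
    using greedy_recurrence_bound c Jteam_nonneg[OF d_nonneg] greedy_step by blast
  then show ?thesis by (simp add: F_def c_def)
qed

end
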